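(* Let $n>5$ with $n\equiv 1\pmod 4$ and put $m=n-1$. Over all even $r\in[2,n-3]$, $E(D_n^s[\boldsymbol r,\boldsymbol{n-r-1}])$ attains its maximum at $r=4$. More precisely: if $\frac m2\equiv 0\pmod 4$, then $E(D_n^s[\boldsymbol r,\boldsymbol{m-r}])$ is strictly decreasing as $r$ runs through $4,8,\dots,\frac m2,\ \frac m2-2,\frac m2-6,\dots,2$ (in this order); if $\frac m2\equiv 2\pmod 4$, then it is strictly decreasing as $r$ runs through $4,8,\dots,\frac m2-2,\ \frac m2,\frac m2-4,\dots,2$.
   Context: A signed digraph (sidigraph) is a digraph in which every arc carries a sign $+1$ or $-1$; its adjacency matrix $A(S)=[a_{ij}]$ has $a_{ij}$ equal to the sign of the arc $w_iw_j$ if it exists and $0$ otherwise. If $\rho_1,\dots,\rho_n$ are the eigenvalues of $A(S)$, the energy of $S$ is $E(S)=\sum_{k=1}^n|\mathrm{Re}(\rho_k)|$. The sign of a directed cycle is the product of the signs of its arcs. For $k\ge 2$, $C_k$ denotes a directed cycle of length $k$ with sign $+1$ and $\boldsymbol{C}_k$ a directed cycle of length $k$ with sign $-1$. It is known that $E(C_k)=2\cot\frac{\pi}{k}$ if $k\equiv0\pmod 4$, $2\csc\frac{\pi}{k}$ if $k\equiv 2\pmod 4$, $\csc\frac{\pi}{2k}$ if $k$ is odd; and $E(\boldsymbol C_k)=2\csc\frac{\pi}{k}$ if $k\equiv0\pmod 4$, $2\cot\frac{\pi}{k}$ if $k\equiv 2\pmod 4$, $\csc\frac{\pi}{2k}$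 if $k$ is odd. For integers $p,q\ge 2$ with $p+q\le n$, $D_n^s[p,q]$, $D_n^s[\boldsymbol p,\boldsymbol q]$, $D_n^s[\boldsymbol p,q]$, $D_n^s[p,\boldsymbol q]$ denote an $n$-vertex sidigraph whose only directed cycles are two vertex-disjoint cycles of lengths $p$ and $q$ (all other vertices lying on no directed cycle), where a bold entry indicates that the cycle of that length is negative and a non-bold entry that it is positive. Its energy is the sum of the energies of its two cycles, e.g. $E(D_n^s[\boldsymbol p,\boldsymbol q])=E(\boldsymbol C_p)+E(\boldsymbol C_q)$; in particular the order of the two entries does not matter. *)

theory Defs
  imports Complex_Main
begin

text \<open>Energy of the negative directed cycle of length k (k \<ge> 2), as given in the
  paper's context: 2 csc(pi/k) if k = 0 mod 4, 2 cot(pi/k) if k = 2 mod 4,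
  csc(pi/(2k)) if k odd.\<close>
definition neg_cycle_energy :: "nat \<Rightarrow> real" where
  "neg_cycle_energy k =
     (if k mod 4 = 0 then 2 / sin (pi / real k)
      else if k mod 4 = 2 then 2 * cot (pi / real k)
      else 1 / sin (pi / (2 * real k)))"

text \<open>Energy of D_n^s[p-bold, q-bold]: sum of the energies of its two negative cycles.\<close>
definition energy_D_negneg :: "nat \<Rightarrow> nat \<Rightarrow> real" where
  "energy_D_negneg p q = neg_cycle_energy p + neg_cycle_energy q"

end

theory Submission
  imports Defs
begin

text \<open>Write \<open>m = n - 1\<close>; then \<open>m \<equiv> 0 (mod 4)\<close>, so the cycle lengths \<open>r\<close> and \<open>m - r\<close> lie in
  the same class mod 4. For \<open>r \<equiv> 0\<close> the energy is \<open>2 (csc (\<pi>/r) + csc (\<pi>/(m-r)))\<close>, for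
  \<open>r \<equiv> 2\<close> it is \<open>2 (cot (\<pi>/r) + cot (\<pi>/(m-r)))\<close>. Since \<open>cot (\<pi>/x) < x/\<pi> < csc (\<pi>/x)\<close>, every
  energy of the first kind exceeds \<open>2m/\<pi>\<close> and every one of the second kind is below it. On
  \<open>x > 1\<close>, \<open>csc (\<pi>/x)\<close> is strictly convex and \<open>cot (\<pi>/x)\<close> strictly concave, so \<open>f x + f (m - x)\<close>
  strictly decreases, resp. increases, as \<open>x\<close> grows towards \<open>m/2\<close>; in particular \<open>r = 4\<close> gives
  the maximum.\<close>

lemma sin_less_self:
  fixes t :: real
  assumes "0 < t"
  shows "sin t < t"
proof (cases "t \<le> pi")
  case True
  have "(\<lambda>u. u - sin u) 0 < (\<lambda>u. u - sin u) t"
  proof (rule DERIV_pos_imp_increasing_open[OF assms])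
    fix u :: real
    assume "0 < u" "u < t"
    then have "cos u < cos 0"
      using True by (intro cos_monotone_0_pi) auto
    then show "\<exists>y. ((\<lambda>u. u - sin u) has_real_derivative y) (at u) \<and> 0 < y"
      by (intro exI[of _ "1 - cos u"]) (auto intro!: derivative_eq_intros)
  qed (intro continuous_intros)
  then show ?thesis by simp
next
  case False
  then show ?thesis
    using sin_le_one[of t] pi_ge_two by linarith
qed

lemma mult_cos_less_sin:
  fixes t :: real
  assumes "0 < t" "t < pi"
  shows "t * cos t < sin t"
proof -
  have "(\<lambda>u. sin u - u * cos u) 0 < (\<lambda>u. sin u - u * cos u) t"
  proof (rule DERIV_pos_imp_increasing_open[OF assms(1)])
    fix u :: real
    assume "0 < u" "u < t"
    moreover from this have "0 < sin u"
      using assms by (intro sin_gt_zero) auto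
    ultimately show "\<exists>y. ((\<lambda>u. sin u - u * cos u) has_real_derivative y) (at u) \<and> 0 < y"
      by (intro exI[of _ "u * sin u"]) (auto intro!: derivative_eq_intros)
  qed (intro continuous_intros)
  then show ?thesis by simp
qed

lemma two_mult_sin_cos_less:
  fixes u :: real
  assumes "0 < u" "u < pi"
  shows "2 * sin u * cos u < u * (sin u)\<^sup>2 + 2 * u * (cos u)\<^sup>2"
proof -
  have sin_pos: "0 < sin u"
    using assms by (rule sin_gt_zero)
  show ?thesis
  proof (cases "0 \<le> cos u")
    case True
    have "cos u < 1"
      using cos_monotone_0_pi[of 0 u] assms by auto
    then have "0 < (1 - cos u)\<^sup>2"
      by simp
    then have "2 * cos u < 1 + (cos u)\<^sup>2"
      by (simp add: power2_eq_square algebra_simps)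
    then have "2 * cos u < (sin u)\<^sup>2 + 2 * (cos u)\<^sup>2"
      using sin_cos_squared_add[of u] by linarith
    then have "u * (2 * cos u) < u * ((sin u)\<^sup>2 + 2 * (cos u)\<^sup>2)"
      using assms(1) by (rule mult_strict_left_mono)
    then have "2 * u * cos u < u * (sin u)\<^sup>2 + 2 * u * (cos u)\<^sup>2"
      by (simp add: algebra_simps)
    moreover have "2 * sin u * cos u \<le> 2 * u * cos u"
      using sin_less_self[OF assms(1)] True by (simp add: mult_right_mono)
    ultimately show ?thesis by linarith
  next
    case False
    then have "2 * sin u * cos u < 0"
      using sin_pos by (simp add: mult_pos_neg)
    moreover have "0 < u * (sin u)\<^sup>2" "0 \<le> 2 * u * (cos u)\<^sup>2"
      using assms(1) sin_pos by simp_all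
    ultimately show ?thesis by linarith
  qed
qed

text \<open>With \<open>t = \<pi>/x\<close> the expression below is \<open>\<pi>\<close> times the derivative of \<open>csc (\<pi>/x)\<close>, so this is the
  convexity of \<open>csc (\<pi>/x)\<close>.\<close>

lemma sq_mult_cos_div_sin_sq_strict_antimono:
  fixes s t :: real
  assumes "0 < s" "s < t" "t < pi"
  shows "t\<^sup>2 * cos t / (sin t)\<^sup>2 < s\<^sup>2 * cos s / (sin s)\<^sup>2"
proof (rule DERIV_neg_imp_decreasing_open[OF assms(2)])
  let ?d = "\<lambda>u::real. u * (2 * sin u * cos u - u * (sin u)\<^sup>2 - 2 * u * (cos u)\<^sup>2) / (sin u)^3"
  have deriv: "((\<lambda>u. u\<^sup>2 * cos u / (sin u)\<^sup>2) has_real_derivative ?d u) (at u)"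
    if "0 < u" "u < pi" for u :: real
  proof -
    have "sin u \<noteq> 0"
      using sin_gt_zero[OF that] by simp
    then show ?thesis
      by (auto intro!: derivative_eq_intros simp: power2_eq_square power3_eq_cube field_simps)
  qed
  fix u :: real
  assume u: "s < u" "u < t"
  then have u_pos: "0 < u" and sin_pos: "0 < sin u"
    using assms by (auto intro: sin_gt_zero)
  have "2 * sin u * cos u < u * (sin u)\<^sup>2 + 2 * u * (cos u)\<^sup>2"
    using u assms by (intro two_mult_sin_cos_less) auto
  then have "?d u < 0"
    using u_pos sin_pos by (simp add: divide_neg_pos mult_pos_neg)
  then show "\<exists>y. ((\<lambda>u. u\<^sup>2 * cos u / (sin u)\<^sup>2) has_real_derivative y) (at u) \<and> y < 0"
    using deriv[of u] u assms by auto
next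
  show "continuous_on {s..t} (\<lambda>u. u\<^sup>2 * cos u / (sin u)\<^sup>2)"
  proof (intro continuous_intros ballI)
    fix u
    assume "u \<in> {s..t}"
    then show "(sin u)\<^sup>2 \<noteq> 0"
      using assms sin_gt_zero[of u] by auto
  qed
qed

lemma reflected_sum_strict_antimono_of_deriv_strict_mono:
  fixes f f' :: "real \<Rightarrow> real"
  assumes deriv: "\<And>x. a < x \<Longrightarrow> (f has_real_derivative f' x) (at x)"
    and deriv_mono: "\<And>x y. a < x \<Longrightarrow> x < y \<Longrightarrow> f' x < f' y"
    and "a < x" "x < y" "2 * y \<le> M"
  shows "f y + f (M - y) < f x + f (M - x)"
proof -
  have reflected_deriv: "((\<lambda>z. f z + f (M - z)) has_real_derivative f' z - f' (M - z)) (at z)"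
    if "x \<le> z" "z \<le> y" for z
    using that assms
    by (auto intro!: derivative_eq_intros DERIV_chain2[of f "f' (M - z)"] deriv)
  show ?thesis
  proof (rule DERIV_neg_imp_decreasing_open[OF \<open>x < y\<close>])
    fix z
    assume "x < z" "z < y"
    moreover from this have "f' z < f' (M - z)"
      using assms by (intro deriv_mono) auto
    ultimately show "\<exists>d. ((\<lambda>z. f z + f (M - z)) has_real_derivative d) (at z) \<and> d < 0"
      using reflected_deriv[of z] by (intro exI[of _ "f' z - f' (M - z)"]) auto
  next
    show "continuous_on {x..y} (\<lambda>z. f z + f (M - z))"
      using reflected_deriv by (blast intro: DERIV_atLeastAtMost_imp_continuous_on)
  qed
qed

definition csc_pi_div :: "real \<Rightarrow> real" where
  "csc_pi_div x = 1 / sin (pi / x)"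

definition cot_pi_div :: "real \<Rightarrow> real" where
  "cot_pi_div x = cot (pi / x)"

lemma pi_divide_bounds:
  fixes x :: real
  assumes "1 < x"
  shows "0 < pi / x" "pi / x < pi" "0 < sin (pi / x)"
proof -
  show "0 < pi / x" "pi / x < pi"
    using assms by (simp_all add: divide_less_eq)
  then show "0 < sin (pi / x)"
    by (rule sin_gt_zero)
qed

lemma has_real_derivative_csc_pi_div:
  fixes x :: real
  assumes "1 < x"
  shows "(csc_pi_div has_real_derivative (pi / x)\<^sup>2 * cos (pi / x) / (sin (pi / x))\<^sup>2 / pi) (at x)"
proof -
  have "sin (pi / x) \<noteq> 0" "x \<noteq> 0"
    using pi_divide_bounds[OF assms] assms by auto
  then have "(csc_pi_div has_real_derivative pi * cos (pi / x) / (x\<^sup>2 * (sin (pi / x))\<^sup>2)) (at x)"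
    unfolding csc_pi_div_def[abs_def]
    by (auto intro!: derivative_eq_intros simp: power2_eq_square field_simps)
  moreover have "pi * cos (pi / x) / (x\<^sup>2 * (sin (pi / x))\<^sup>2)
      = (pi / x)\<^sup>2 * cos (pi / x) / (sin (pi / x))\<^sup>2 / pi"
    using \<open>x \<noteq> 0\<close> by (simp add: power2_eq_square field_simps)
  ultimately show ?thesis by simp
qed

lemma has_real_derivative_cot_pi_div:
  fixes x :: real
  assumes "1 < x"
  shows "(cot_pi_div has_real_derivative pi / (x * sin (pi / x))\<^sup>2) (at x)"
proof -
  have "sin (pi / x) \<noteq> 0" "x \<noteq> 0"
    using pi_divide_bounds[OF assms] assms by auto
  then show ?thesis
    unfolding cot_pi_div_def[abs_def] cot_def
    by (auto intro!: derivative_eq_intros simp: power2_eq_square field_simps)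
      (simp flip: distrib_left)
qed

lemma mult_sin_pi_div_strict_mono:
  fixes x y :: real
  assumes "1 < x" "x < y"
  shows "x * sin (pi / x) < y * sin (pi / y)"
proof (rule DERIV_pos_imp_increasing[OF assms(2)])
  fix z :: real
  assume "x \<le> z" "z \<le> y"
  then have z: "1 < z"
    using assms by simp
  have "((\<lambda>z. z * sin (pi / z)) has_real_derivative sin (pi / z) - (pi / z) * cos (pi / z)) (at z)"
    using z by (auto intro!: derivative_eq_intros simp: power2_eq_square field_simps)
  moreover have "(pi / z) * cos (pi / z) < sin (pi / z)"
    using pi_divide_bounds[OF z] by (intro mult_cos_less_sin)
  ultimately show "\<exists>d. ((\<lambda>z. z * sin (pi / z)) has_real_derivative d) (at z) \<and> 0 < d"
    by (intro exI[of _ "sin (pi / z) - (pi / z) * cos (pi / z)"]) auto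
qed

lemma divide_pi_less_csc_pi_div:
  fixes x :: real
  assumes "1 < x"
  shows "x / pi < csc_pi_div x"
proof -
  have "sin (pi / x) < pi / x"
    using pi_divide_bounds[OF assms] by (intro sin_less_self)
  then have "1 / (pi / x) < 1 / sin (pi / x)"
    using pi_divide_bounds[OF assms] assms by (intro divide_strict_left_mono) auto
  then show ?thesis
    unfolding csc_pi_div_def by simp
qed

lemma cot_pi_div_less_divide_pi:
  fixes x :: real
  assumes "1 < x"
  shows "cot_pi_div x < x / pi"
proof -
  have "(pi / x) * cos (pi / x) < sin (pi / x)"
    using pi_divide_bounds[OF assms] by (intro mult_cos_less_sin)
  then have "cos (pi / x) / sin (pi / x) < 1 / (pi / x)"
    using pi_divide_bounds[OF assms] assms by (simp add: field_simps)
  then show ?thesis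
    unfolding cot_pi_div_def cot_def by simp
qed

lemma csc_pi_div_reflected_strict_antimono:
  fixes x y M :: real
  assumes "1 < x" "x < y" "2 * y \<le> M"
  shows "csc_pi_div y + csc_pi_div (M - y) < csc_pi_div x + csc_pi_div (M - x)"
proof (rule reflected_sum_strict_antimono_of_deriv_strict_mono[OF _ _ assms])
  show "(csc_pi_div has_real_derivative (pi / x)\<^sup>2 * cos (pi / x) / (sin (pi / x))\<^sup>2 / pi) (at x)"
    if "1 < x" for x :: real
    using that by (rule has_real_derivative_csc_pi_div)
  show "(pi / x)\<^sup>2 * cos (pi / x) / (sin (pi / x))\<^sup>2 / pi < (pi / y)\<^sup>2 * cos (pi / y) / (sin (pi / y))\<^sup>2 / pi"
    if "1 < x" "x < y" for x y :: real
  proof -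
    have "pi / y < pi / x"
      using that by (intro divide_strict_left_mono) auto
    then have "(pi / x)\<^sup>2 * cos (pi / x) / (sin (pi / x))\<^sup>2 < (pi / y)\<^sup>2 * cos (pi / y) / (sin (pi / y))\<^sup>2"
      using that pi_divide_bounds[of x] pi_divide_bounds[of y]
      by (intro sq_mult_cos_div_sin_sq_strict_antimono) auto
    then show ?thesis
      by (rule divide_strict_right_mono) simp
  qed
qed

lemma cot_pi_div_reflected_strict_mono:
  fixes x y M :: real
  assumes "1 < x" "x < y" "2 * y \<le> M"
  shows "cot_pi_div x + cot_pi_div (M - x) < cot_pi_div y + cot_pi_div (M - y)"
proof -
  have "- cot_pi_div y + - cot_pi_div (M - y) < - cot_pi_div x + - cot_pi_div (M - x)"
  proof (rule reflected_sum_strict_antimono_of_deriv_strict_mono[OF _ _ assms])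
    show "((\<lambda>x. - cot_pi_div x) has_real_derivative - (pi / (x * sin (pi / x))\<^sup>2)) (at x)"
      if "1 < x" for x :: real
      using has_real_derivative_cot_pi_div[OF that] by (rule DERIV_minus)
    show "- (pi / (x * sin (pi / x))\<^sup>2) < - (pi / (y * sin (pi / y))\<^sup>2)"
      if "1 < x" "x < y" for x y :: real
    proof -
      have less: "x * sin (pi / x) < y * sin (pi / y)"
        using that by (rule mult_sin_pi_div_strict_mono)
      have pos: "0 < x * sin (pi / x)"
        using that pi_divide_bounds[of x] by simp
      then have "(x * sin (pi / x))\<^sup>2 < (y * sin (pi / y))\<^sup>2"
        using less by (intro power_strict_mono) auto
      moreover have "0 < y * sin (pi / y)"
        using pos less by linarith
      ultimately have "pi / (y * sin (pi / y))\<^sup>2 < pi / (x * sin (pi / x))\<^sup>2"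
        using pos by (intro divide_strict_left_mono mult_pos_pos) auto
      then show ?thesis by simp
    qed
  qed
  then show ?thesis by simp
qed

lemma mod_4_eq_2_iff:
  fixes x :: nat
  shows "x mod 4 = 2 \<longleftrightarrow> (\<exists>k. x = 4 * k + 2)"
proof
  assume "x mod 4 = 2"
  then show "\<exists>k. x = 4 * k + 2"
    using mult_div_mod_eq[of 4 x] by metis
next
  assume "\<exists>k. x = 4 * k + 2"
  then obtain k where "x = 4 * k + 2" ..
  then show "x mod 4 = 2"
    by (simp only: mod_mult_self4) simp
qed

lemma diff_mod_4_eq_2:
  fixes m r :: nat
  assumes "m mod 4 = 0" "r mod 4 = 2" "r \<le> m"
  shows "(m - r) mod 4 = 2"
proof -
  obtain b where m: "m = 4 * b"
    using assms(1) by (auto elim!: dvdE simp: mod_eq_0_iff_dvd)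
  obtain a where r: "r = 4 * a + 2"
    using assms(2) mod_4_eq_2_iff by blast
  have "m - r = 4 * (b - a - 1) + 2"
    using assms(3) unfolding m r by linarith
  then show ?thesis
    using mod_4_eq_2_iff by blast
qed

lemma neg_cycle_energy_eq_csc_pi_div:
  "k mod 4 = 0 \<Longrightarrow> neg_cycle_energy k = 2 * csc_pi_div (real k)"
  unfolding neg_cycle_energy_def csc_pi_div_def by simp

lemma neg_cycle_energy_eq_cot_pi_div:
  "k mod 4 = 2 \<Longrightarrow> neg_cycle_energy k = 2 * cot_pi_div (real k)"
  unfolding neg_cycle_energy_def cot_pi_div_def by simp

lemma energy_D_negneg_eq_csc_pi_div:
  fixes m r :: nat
  assumes "m mod 4 = 0" "r mod 4 = 0" "r \<le> m"
  shows "energy_D_negneg r (m - r) = 2 * (csc_pi_div r + csc_pi_div (real m - real r))"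
proof -
  have "(m - r) mod 4 = 0"
    using assms by presburger
  then have "neg_cycle_energy (m - r) = 2 * csc_pi_div (real m - real r)"
    using assms by (simp add: neg_cycle_energy_eq_csc_pi_div of_nat_diff)
  then show ?thesis
    using assms unfolding energy_D_negneg_def
    by (simp add: neg_cycle_energy_eq_csc_pi_div algebra_simps)
qed

lemma energy_D_negneg_eq_cot_pi_div:
  fixes m r :: nat
  assumes "m mod 4 = 0" "r mod 4 = 2" "r \<le> m"
  shows "energy_D_negneg r (m - r) = 2 * (cot_pi_div r + cot_pi_div (real m - real r))"
proof -
  have "(m - r) mod 4 = 2"
    using assms by (rule diff_mod_4_eq_2)
  then have "neg_cycle_energy (m - r) = 2 * cot_pi_div (real m - real r)"
    using assms by (simp add: neg_cycle_energy_eq_cot_pi_div of_nat_diff)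
  then show ?thesis
    using assms unfolding energy_D_negneg_def
    by (simp add: neg_cycle_energy_eq_cot_pi_div algebra_simps)
qed

lemma two_mult_divide_pi_less_energy_mod_4_eq_0:
  fixes m r :: nat
  assumes "m mod 4 = 0" "r mod 4 = 0" "0 < r" "r < m"
  shows "2 * real m / pi < energy_D_negneg r (m - r)"
proof -
  have "4 \<le> r" "4 \<le> m - r"
    using assms by presburger+
  then have "real r / pi < csc_pi_div r" "(real m - real r) / pi < csc_pi_div (real m - real r)"
    by (intro divide_pi_less_csc_pi_div; simp)+
  moreover have "real r / pi + (real m - real r) / pi = real m / pi"
    by (simp add: field_simps)
  ultimately show ?thesis
    using energy_D_negneg_eq_csc_pi_div[of m r] assms by simp
qed

lemma energy_less_two_mult_divide_pi_mod_4_eq_2: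
  fixes m r :: nat
  assumes "m mod 4 = 0" "r mod 4 = 2" "r \<le> m"
  shows "energy_D_negneg r (m - r) < 2 * real m / pi"
proof -
  have "2 \<le> r" "2 \<le> m - r"
    using assms diff_mod_4_eq_2[OF assms] mod_less_eq_dividend[of r 4]
      mod_less_eq_dividend[of "m - r" 4] by simp_all
  then have "cot_pi_div r < real r / pi" "cot_pi_div (real m - real r) < (real m - real r) / pi"
    by (intro cot_pi_div_less_divide_pi; simp)+
  moreover have "real r / pi + (real m - real r) / pi = real m / pi"
    by (simp add: field_simps)
  ultimately show ?thesis
    using energy_D_negneg_eq_cot_pi_div[OF assms] by simp
qed

lemma energy_strict_antimono_mod_4_eq_0:
  fixes m a b :: nat
  assumes "m mod 4 = 0" "a mod 4 = 0" "b mod 4 = 0" "0 < a" "a < b" "2 * b \<le> m"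
  shows "energy_D_negneg b (m - b) < energy_D_negneg a (m - a)"
proof -
  have "4 \<le> a"
    using assms by presburger
  then have "csc_pi_div b + csc_pi_div (real m - real b) < csc_pi_div a + csc_pi_div (real m - real a)"
    using assms by (intro csc_pi_div_reflected_strict_antimono) simp_all
  then show ?thesis
    using energy_D_negneg_eq_csc_pi_div[of m a] energy_D_negneg_eq_csc_pi_div[of m b] assms
    by simp
qed

lemma energy_strict_mono_mod_4_eq_2:
  fixes m a b :: nat
  assumes "m mod 4 = 0" "a mod 4 = 2" "b mod 4 = 2" "a < b" "2 * b \<le> m"
  shows "energy_D_negneg a (m - a) < energy_D_negneg b (m - b)"
proof -
  have "2 \<le> a"
    using assms(2) mod_less_eq_dividend[of a 4] by simp
  then have "cot_pi_div a + cot_pi_div (real m - real a) < cot_pi_div b + cot_pi_div (real m - real b)"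
    using assms by (intro cot_pi_div_reflected_strict_mono) simp_all
  then show ?thesis
    using energy_D_negneg_eq_cot_pi_div[of m a] energy_D_negneg_eq_cot_pi_div[of m b] assms
    by simp
qed

lemma energy_le_energy_4:
  fixes m r :: nat
  assumes m: "m mod 4 = 0" "8 \<le> m" and r: "even r" "0 < r" "r < m"
  shows "energy_D_negneg r (m - r) \<le> energy_D_negneg 4 (m - 4)"
proof (cases "r mod 4 = 0")
  case False
  then have "r mod 4 = 2"
    using r by presburger
  then have "energy_D_negneg r (m - r) < 2 * real m / pi"
    using m r by (intro energy_less_two_mult_divide_pi_mod_4_eq_2) simp_all
  also have "\<dots> < energy_D_negneg 4 (m - 4)"
    using m by (intro two_mult_divide_pi_less_energy_mod_4_eq_0) simp_all
  finally show ?thesis by simp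
next
  case r4: True
  obtain s where s: "s mod 4 = 0" "0 < s" "2 * s \<le> m"
    and energy_s: "energy_D_negneg r (m - r) = energy_D_negneg s (m - s)"
  proof (cases "2 * r \<le> m")
    case True
    then show ?thesis
      using that[of r] r4 r by simp
  next
    case False
    have "energy_D_negneg r (m - r) = energy_D_negneg (m - r) (m - (m - r))"
      using r unfolding energy_D_negneg_def by simp
    moreover have "(m - r) mod 4 = 0"
      using m r4 r by presburger
    ultimately show ?thesis
      using that False r by simp
  qed
  show ?thesis
  proof (cases "s = 4")
    case False
    then have "4 < s"
      using s by presburger
    then have "energy_D_negneg s (m - s) < energy_D_negneg 4 (m - 4)"
      using m s by (intro energy_strict_antimono_mod_4_eq_0) simp_all
    then show ?thesis
      using energy_s by simp
  qed (use energy_s in simp)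
qed

lemma energy_sorted_mod_4_eq_0_then_mod_4_eq_2:
  fixes m c k :: nat
  assumes m: "m mod 4 = 0" and c: "c mod 4 = 2" "2 * c \<le> m" "4 * k \<le> c + 2"
  shows "sorted_wrt (\<lambda>a b. a > b)
    (map (\<lambda>r. energy_D_negneg r (m - r))
      (map (\<lambda>i. 4 * (i + 1)) [0..<m div 8] @ map (\<lambda>i. c - 4 * i) [0..<k]))"
proof -
  let ?E = "\<lambda>r. energy_D_negneg r (m - r)"
  have "8 * (m div 8) \<le> m"
    by simp
  then have multiples_of_4: "(4 * (i + 1)) mod 4 = 0" "0 < 4 * (i + 1)" "2 * (4 * (i + 1)) \<le> m"
    if "i < m div 8" for i
    using that by simp_all
  obtain a where a: "c = 4 * a + 2"
    using c(1) mod_4_eq_2_iff by blast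
  have twos: "(c - 4 * i) mod 4 = 2" "2 * (c - 4 * i) \<le> m" if "i < k" for i
  proof -
    have "c - 4 * i = 4 * (a - i) + 2"
      using that c(3) unfolding a by linarith
    then show "(c - 4 * i) mod 4 = 2"
      using mod_4_eq_2_iff by blast
    show "2 * (c - 4 * i) \<le> m"
      using c(2) by linarith
  qed
  have "sorted_wrt (\<lambda>a b. ?E a > ?E b) (map (\<lambda>i. 4 * (i + 1)) [0..<m div 8])"
    using m multiples_of_4
    by (auto simp: sorted_wrt_iff_nth_less intro!: energy_strict_antimono_mod_4_eq_0)
  moreover have "?E (c - 4 * j) < ?E (c - 4 * i)" if "i < j" "j < k" for i j
    using m twos[of i] twos[of j] that by (intro energy_strict_mono_mod_4_eq_2) auto
  then have "sorted_wrt (\<lambda>a b. ?E a > ?E b) (map (\<lambda>i. c - 4 * i) [0..<k])"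
    unfolding sorted_wrt_iff_nth_less by simp
  moreover have "2 * real m / pi < ?E x" if "x \<in> set (map (\<lambda>i. 4 * (i + 1)) [0..<m div 8])" for x
    using that m multiples_of_4 by (auto intro!: two_mult_divide_pi_less_energy_mod_4_eq_0)
  moreover have "?E y < 2 * real m / pi" if y: "y \<in> set (map (\<lambda>i. c - 4 * i) [0..<k])" for y
  proof -
    obtain i where "i < k" "y = c - 4 * i"
      using y by auto
    then show ?thesis
      using m twos[of i] by (intro energy_less_two_mult_divide_pi_mod_4_eq_2) auto
  qed
  ultimately show ?thesis
    by (fastforce simp: sorted_wrt_append sorted_wrt_map)
qed

theorem lemma3p10:
  fixes n m :: nat
  assumes "n > 5" and "n mod 4 = 1" and "m = n - 1"
  shows "(\<forall>r. even r \<and> 2 \<le> r \<and> r \<le> n - 3 \<longrightarrow>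
            energy_D_negneg r (n - r - 1) \<le> energy_D_negneg 4 (n - 4 - 1))
    \<and> ((m div 2) mod 4 = 0 \<longrightarrow>
         sorted_wrt (\<lambda>a b. a > b)
           (map (\<lambda>r. energy_D_negneg r (m - r))
              (map (\<lambda>i. 4 * (i + 1)) [0..<m div 8] @
               map (\<lambda>i. m div 2 - 2 - 4 * i) [0..<m div 8])))
    \<and> ((m div 2) mod 4 = 2 \<longrightarrow>
         sorted_wrt (\<lambda>a b. a > b)
           (map (\<lambda>r. energy_D_negneg r (m - r))
              (map (\<lambda>i. 4 * (i + 1)) [0..<m div 8] @
               map (\<lambda>i. m div 2 - 4 * i) [0..<m div 8 + 1])))"
proof -
  let "_ \<and> (_ \<longrightarrow> ?sorted_0) \<and> (_ \<longrightarrow> ?sorted_2)" = ?thesis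
  have m: "m mod 4 = 0" "8 \<le> m"
    using assms by presburger+
  have halves: "2 * (m div 2) \<le> m" "4 \<le> m div 2" "4 * (m div 8) \<le> m div 2"
    using m by presburger+
  have maximum: "energy_D_negneg r (n - r - 1) \<le> energy_D_negneg 4 (n - 4 - 1)"
    if "even r" "2 \<le> r" "r \<le> n - 3" for r
    using energy_le_energy_4[OF m, of r] that assms by (simp add: diff_commute)
  have sorted_0: ?sorted_0 if "(m div 2) mod 4 = 0"
  proof (rule energy_sorted_mod_4_eq_0_then_mod_4_eq_2[OF m(1)])
    show "(m div 2 - 2) mod 4 = 2"
      using that halves by (intro diff_mod_4_eq_2) auto
  qed (use halves in simp_all)
  have sorted_2: ?sorted_2 if "(m div 2) mod 4 = 2"
  proof (rule energy_sorted_mod_4_eq_0_then_mod_4_eq_2[OF m(1) that halves(1)])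
    show "4 * (m div 8 + 1) \<le> m div 2 + 2"
      using that mult_div_mod_eq[of 4 "m div 2"] div_mult2_eq[of m 2 4] by simp
  qed
  show ?thesis
    using maximum sorted_0 sorted_2 by blast
qed

end
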